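(* Let $X$ be a compact zero-dimensional metric space, $X_{\max},X_{\min}\subseteq X$ closed subsets, and $\varphi:X\setminus X_{\max}\to X\setminus X_{\min}$ a homeomorphism. Then the following are equivalent: (i) for every clopen $U\subseteq X$ with $X_{\min}\subseteq U$, $\bigcup_{n=0}^{\infty}\varphi^n(U)=X$; (ii) for every clopen $V\subseteq X$ with $X_{\max}\subseteq V$, $\bigcup_{n=0}^{\infty}\varphi^{-n}(V)=X$.
   Context: For $n\in\mathbb{Z}$, $\varphi^n$ denotes the $n$-fold composite of $\varphi$ (of $\varphi^{-1}$ if $n<0$) on its natural domain, $\varphi^0=\mathrm{id}_X$, and for $U\subseteq X$, $\varphi^n(U)=\varphi^n(U\cap\mathrm{dom}\,\varphi^n)$. *)

theory Defs
  imports "HOL-Analysis.Analysis"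
begin

text \<open>Image of a set under the n-fold partial composite of a partial map f with domain D:
  f^0(U) = U, and f^(n+1)(U) = f(f^n(U) \<inter> D).\<close>
primrec pimg :: "('a \<Rightarrow> 'a) \<Rightarrow> 'a set \<Rightarrow> nat \<Rightarrow> 'a set \<Rightarrow> 'a set" where
  "pimg f D 0 U = U"
| "pimg f D (Suc n) U = f ` (pimg f D n U \<inter> D)"

end

theory Submission
  imports Defs
begin

text \<open>If a clopen U \<supseteq> Xmin has forward orbit W \<noteq> X, then X - W is a nonempty compact set
  mapped into itself by \<phi>\<inverse>. The intersection of its \<phi>\<inverse>-images is a nonempty compact set K
  inside the domain of \<phi> with \<phi>(K) \<subseteq> K. By zero-dimensionality the compact set Xmax has a
  clopen neighbourhood V disjoint from K, and every backward image of V stays disjoint from K.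
  The converse is the same argument applied to \<phi>\<inverse>.\<close>

definition clopen_sweeping :: "'a::topological_space set \<Rightarrow> ('a \<Rightarrow> 'a) \<Rightarrow> 'a set \<Rightarrow> 'a set \<Rightarrow> bool"
  where "clopen_sweeping X f D S \<longleftrightarrow>
    (\<forall>U. openin (top_of_set X) U \<and> closedin (top_of_set X) U \<and> S \<subseteq> U
       \<longrightarrow> (\<Union>n. pimg f D n U) = X)"

lemma pimg_cong:
  assumes "\<And>x. x \<in> D \<Longrightarrow> f x = g x"
  shows "pimg f D n U = pimg g D n U"
  using assms by (induction n) (auto simp: image_def)

lemma decseq_pimg:
  assumes "f ` (S \<inter> D) \<subseteq> S"
  shows "decseq (\<lambda>n. pimg f D n S)"
proof -
  have "pimg f D (Suc n) S \<subseteq> pimg f D n S" for n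
    by (induction n) (use assms in auto)
  then show ?thesis by (simp add: decseq_Suc_iff)
qed

lemma compact_pimg:
  assumes "continuous_on D f" "compact S" "S \<subseteq> D" "f ` S \<subseteq> S"
  shows "compact (pimg f D n S)"
proof (induction n)
  case (Suc n)
  have "pimg f D n S \<subseteq> D"
    using decseqD[OF decseq_pimg, of f S D 0 n] assms(3,4) by auto
  then show ?case
    using Suc assms(1) by (auto intro: compact_continuous_image continuous_on_subset simp: Int_absorb2)
qed (use assms in simp)

lemma openin_pimg:
  assumes "homeomorphism D E f g"
    and "openin (top_of_set X) D" "openin (top_of_set X) E" "openin (top_of_set X) U"
  shows "openin (top_of_set X) (pimg f D n U)"
proof (induction n)
  case (Suc n)
  then have "openin (top_of_set D) (pimg f D n U \<inter> D)"
    using assms(2) by (meson inf_le2 openin_Int openin_imp_subset openin_subset_trans)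
  then have "openin (top_of_set E) (pimg f D (Suc n) U)"
    using homeomorphism_imp_open_map[OF assms(1)] by simp
  then show ?case
    using assms(3) openin_trans by blast
qed (use assms in simp)

lemma image_Union_pimg_subset: "f ` ((\<Union>n. pimg f D n U) \<inter> D) \<subseteq> (\<Union>n. pimg f D n U)"
proof clarify
  fix x n assume "x \<in> pimg f D n U" "x \<in> D"
  then have "f x \<in> pimg f D (Suc n) U" by simp
  then show "f x \<in> (\<Union>n. pimg f D n U)" by blast
qed

lemma image_complement_Union_pimg_subset:
  assumes hom: "homeomorphism D E f g" and "D \<subseteq> X"
    and "X - (\<Union>n. pimg f D n U) \<subseteq> E"
  shows "g ` (X - (\<Union>n. pimg f D n U)) \<subseteq> X - (\<Union>n. pimg f D n U)"
proof
  fix y assume "y \<in> g ` (X - (\<Union>n. pimg f D n U))"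
  then obtain x where x: "x \<in> X - (\<Union>n. pimg f D n U)" "y = g x" by blast
  with assms(3) have "x \<in> E" by blast
  then have "y \<in> D" "f y = x"
    using hom x(2) by (auto dest: homeomorphism_image2 homeomorphism_apply2)
  moreover from calculation have "y \<notin> (\<Union>n. pimg f D n U)"
    using image_Union_pimg_subset[of f D U] x(1) by blast
  ultimately show "y \<in> X - (\<Union>n. pimg f D n U)"
    using \<open>D \<subseteq> X\<close> by blast
qed

lemma pimg_disjoint:
  assumes "V \<inter> K = {}" and "\<And>y. y \<in> D \<Longrightarrow> f y \<in> K \<Longrightarrow> y \<in> K"
  shows "pimg f D n V \<inter> K = {}"
  by (induction n) (use assms in auto)

lemma compact_decseq_Inter_nonempty:
  fixes K :: "nat \<Rightarrow> 'a::t2_space set"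
  assumes "\<And>n. compact (K n)" "\<And>n. K n \<noteq> {}" "decseq K"
  shows "(\<Inter>n. K n) \<noteq> {}"
proof -
  have "K 0 \<inter> (\<Inter>n. K n) \<noteq> {}"
  proof (rule compact_imp_fip_image)
    fix I :: "nat set" assume "finite I"
    then have "K (Max (insert 0 I)) \<subseteq> K i" if "i \<in> insert 0 I" for i
      using that by (intro decseqD[OF assms(3)] Max_ge) auto
    then show "K 0 \<inter> (\<Inter>i\<in>I. K i) \<noteq> {}"
      using assms(2) by blast
  qed (use assms(1) compact_imp_closed in auto)
  then show ?thesis by blast
qed

lemma zero_dimensional_clopen_separation:
  assumes "T dim_le 0" "compactin T K" "closedin T C" "K \<inter> C = {}"
  obtains V where "openin T V" "closedin T V" "K \<subseteq> V" "V \<inter> C = {}"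
proof -
  define \<U> where "\<U> = {Q. openin T Q \<and> closedin T Q \<and> Q \<inter> C = {}}"
  have "K \<subseteq> \<Union>\<U>"
  proof
    fix x assume "x \<in> K"
    moreover have "openin T (topspace T - C)"
      using assms(3) by blast
    ultimately obtain Q where "openin T Q" "closedin T Q" "x \<in> Q" "Q \<subseteq> topspace T - C"
      using assms(1,2,4) compactin_subset_topspace
      by (force simp: dimension_le_0_neighbourhood_base_of_clopen open_neighbourhood_base_of)
    then show "x \<in> \<Union>\<U>"
      unfolding \<U>_def by blast
  qed
  then obtain \<F> where "finite \<F>" "\<F> \<subseteq> \<U>" "K \<subseteq> \<Union>\<F>"
    using assms(2) unfolding compactin_def \<U>_def by (metis (no_types, lifting) mem_Collect_eq)
  then show ?thesis
    by (intro that[of "\<Union>\<F>"] openin_Union closedin_Union) (auto simp: \<U>_def)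
qed

lemma backward_invariant_compact_contains_forward_invariant:
  fixes f g :: "'a::t2_space \<Rightarrow> 'a"
  assumes hom: "homeomorphism D E f g"
    and C: "compact C" "C \<noteq> {}" "C \<subseteq> E" "g ` C \<subseteq> C"
  obtains K where "compact K" "K \<noteq> {}" "K \<subseteq> C \<inter> D" "f ` K \<subseteq> K"
proof -
  have gE: "g ` E = D" and fg: "\<And>y. y \<in> E \<Longrightarrow> f (g y) = y" and "continuous_on E g"
    using hom by (auto simp: homeomorphism_def)
  define K where "K = (\<Inter>n. pimg g E n C)"
  have dec: "decseq (\<lambda>n. pimg g E n C)"
    using C by (intro decseq_pimg) auto
  then have sub: "pimg g E n C \<subseteq> C" for n
    using decseqD[OF dec, of 0 n] by simp
  have compact: "compact (pimg g E n C)" for n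
    using C \<open>continuous_on E g\<close> by (intro compact_pimg)
  have "pimg g E n C \<subseteq> E" for n
    using sub C by blast
  then have nonempty: "pimg g E n C \<noteq> {}" for n
    by (induction n) (use C in \<open>simp_all add: Int_absorb2\<close>)
  have "K \<noteq> {}"
    unfolding K_def
    by (rule compact_decseq_Inter_nonempty[of "\<lambda>n. pimg g E n C", OF compact nonempty dec])
  moreover have "compact K"
  proof -
    have "K = C \<inter> (\<Inter>n. pimg g E n C)"
      unfolding K_def using sub by blast
    moreover have "closed (\<Inter>n. pimg g E n C)"
      using compact by (simp add: closed_INT compact_imp_closed)
    ultimately show ?thesis
      using C by (simp add: compact_Int_closed)
  qed
  moreover have "K \<subseteq> C \<inter> D"
  proof -
    have "K \<subseteq> pimg g E 0 C \<inter> pimg g E 1 C"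
      unfolding K_def by blast
    then show ?thesis
      using gE by auto
  qed
  moreover have "f ` K \<subseteq> K"
  proof clarify
    fix x assume x: "x \<in> K"
    have "f x \<in> pimg g E n C" for n
    proof -
      from x have "x \<in> pimg g E (Suc n) C"
        unfolding K_def by blast
      then obtain y where "y \<in> pimg g E n C" "y \<in> E" "x = g y"
        by auto
      then show ?thesis
        using fg by simp
    qed
    then show "f x \<in> K"
      unfolding K_def by blast
  qed
  ultimately show ?thesis
    using that by blast
qed

lemma clopen_sweeping_inverse:
  fixes X A B :: "'a::metric_space set"
  assumes X: "compact X" "(top_of_set X) dim_le 0"
    and A: "closed A" "A \<subseteq> X" and B: "closed B"
    and hom: "homeomorphism (X - A) (X - B) f g"
    and sweep_g: "clopen_sweeping X g (X - B) A"
  shows "clopen_sweeping X f (X - A) B"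
  unfolding clopen_sweeping_def
proof (intro allI impI, elim conjE)
  fix U assume U: "openin (top_of_set X) U" "closedin (top_of_set X) U" "B \<subseteq> U"
  define W where "W = (\<Union>n. pimg f (X - A) n U)"
  have "openin (top_of_set X) (X - A)" "openin (top_of_set X) (X - B)"
    using A(1) B by (metis Diff_eq open_Compl openin_open_Int)+
  then have W_open: "openin (top_of_set X) W"
    unfolding W_def using hom U(1) by (intro openin_Union) (auto intro: openin_pimg)
  show "W = X"
  proof (rule ccontr)
    assume "W \<noteq> X"
    define C where "C = X - W"
    have "C \<noteq> {}"
      using \<open>W \<noteq> X\<close> W_open openin_imp_subset unfolding C_def by blast
    have "closedin (top_of_set X) C"
      unfolding C_def using W_open by (simp add: closedin_diff)
    then have "compact C"
      using X(1) closed_compactin[of "top_of_set X" X C] closedin_subset[of "top_of_set X" C]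
      by (simp add: compactin_subtopology)
    have "U \<subseteq> W"
      unfolding W_def using pimg.simps(1)[of f "X - A" U] by blast
    then have "C \<subseteq> X - B"
      using U(3) unfolding C_def by blast
    have "g ` C \<subseteq> C"
      using image_complement_Union_pimg_subset[OF hom, of X U] \<open>C \<subseteq> X - B\<close>
      unfolding C_def W_def by blast
    obtain K where K: "compact K" "K \<noteq> {}" "K \<subseteq> C \<inter> (X - A)" "f ` K \<subseteq> K"
      using backward_invariant_compact_contains_forward_invariant
        [OF hom \<open>compact C\<close> \<open>C \<noteq> {}\<close> \<open>C \<subseteq> X - B\<close> \<open>g ` C \<subseteq> C\<close>] .
    have "compactin (top_of_set X) A"
      using X(1) A compact_Int_closed[of X A] by (simp add: compactin_subtopology Int_absorb1)
    moreover have "closedin (top_of_set X) K"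
      using K unfolding C_def by (intro closed_subset compact_imp_closed) auto
    ultimately obtain V where V: "openin (top_of_set X) V" "closedin (top_of_set X) V"
      "A \<subseteq> V" "V \<inter> K = {}"
      using zero_dimensional_clopen_separation[OF X(2)] K(3) by blast
    have "pimg g (X - B) n V \<inter> K = {}" for n
    proof (rule pimg_disjoint)
      fix y assume "y \<in> X - B" "g y \<in> K"
      then show "y \<in> K"
        using hom K(4) by (metis homeomorphism_apply2 image_subset_iff)
    qed (use V in simp)
    then have "(\<Union>n. pimg g (X - B) n V) \<noteq> X"
      using K unfolding C_def by blast
    with sweep_g V show False
      unfolding clopen_sweeping_def by blast
  qed
qed

theorem proposition4p5:
  fixes X Xmax Xmin :: "'a::metric_space set" and \<phi> :: "'a \<Rightarrow> 'a"
  assumes "compact X"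
    and "(top_of_set X) dim_le 0"
    and "closed Xmax" and "Xmax \<subseteq> X"
    and "closed Xmin" and "Xmin \<subseteq> X"
    and "\<exists>\<psi>. homeomorphism (X - Xmax) (X - Xmin) \<phi> \<psi>"
  shows "(\<forall>U. openin (top_of_set X) U \<and> closedin (top_of_set X) U \<and> Xmin \<subseteq> U
            \<longrightarrow> (\<Union>n. pimg \<phi> (X - Xmax) n U) = X)
     \<longleftrightarrow> (\<forall>V. openin (top_of_set X) V \<and> closedin (top_of_set X) V \<and> Xmax \<subseteq> V
            \<longrightarrow> (\<Union>n. pimg (inv_into (X - Xmax) \<phi>) (X - Xmin) n V) = X)"
proof -
  obtain \<psi> where hom: "homeomorphism (X - Xmax) (X - Xmin) \<phi> \<psi>"
    using assms(7) by blast
  have inv: "inv_into (X - Xmax) \<phi> x = \<psi> x" if "x \<in> X - Xmin" for x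
  proof (rule inv_into_f_eq)
    show "inj_on \<phi> (X - Xmax)"
      using homeomorphism_apply1[OF hom] by (rule inj_on_inverseI)
    show "\<psi> x \<in> X - Xmax" "\<phi> (\<psi> x) = x"
      using hom that by (auto dest: homeomorphism_image2 homeomorphism_apply2)
  qed
  then have "pimg (inv_into (X - Xmax) \<phi>) (X - Xmin) n V = pimg \<psi> (X - Xmin) n V" for n V
    by (rule pimg_cong)
  moreover have "clopen_sweeping X \<phi> (X - Xmax) Xmin \<longleftrightarrow> clopen_sweeping X \<psi> (X - Xmin) Xmax"
    using clopen_sweeping_inverse[OF assms(1-5) hom]
      clopen_sweeping_inverse[OF assms(1,2,5,6,3) homeomorphism_symD[OF hom]] by blast
  ultimately show ?thesis
    unfolding clopen_sweeping_def by simp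
qed

end
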